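(* Let $A_i\in\mathbb{R}^{n\times n}$ ($i=1,\dots,q_A$), $B_j\in\mathbb{R}^{n\times n_f}$ ($j=1,\dots,q_B$), $C_k\in\mathbb{R}^{n_o\times n}$ ($k=1,\dots,q_C$), and $\hat A_i\in\mathbb{R}^{r\times r}$, $\hat B_j\in\mathbb{R}^{r\times n_f}$, $\hat C_k\in\mathbb{R}^{n_o\times r}$. Set \[ \mathbf{C}=\begin{bmatrix}C_1^{\mathrm T}&\cdots&C_{q_C}^{\mathrm T}\end{bmatrix}^{\mathrm T},\quad \hat{\mathbf{C}}=\begin{bmatrix}\hat C_1^{\mathrm T}&\cdots&\hat C_{q_C}^{\mathrm T}\end{bmatrix}^{\mathrm T},\quad \mathbf{B}=\begin{bmatrix}B_1&\cdots&B_{q_B}\end{bmatrix},\quad \hat{\mathbf{B}}=\begin{bmatrix}\hat B_1&\cdots&\hat B_{q_B}\end{bmatrix}. \] Assume $\mathbf{B}$ has full column rank and $\mathbf{C}$ has full row rank, with singular value decompositions \[ \mathbf{C}=U_{\mathbf{C}}\begin{bmatrix}\Sigma_{\mathbf{C}}&0\end{bmatrix}\begin{bmatrix}V_{\mathbf{C},1}&V_{\mathbf{C},2}\end{bmatrix}^{\mathrm T},\qquad \mathbf{B}=\begin{bmatrix}U_{\mathbf{B},1}&U_{\mathbf{B},2}\end{bmatrix}\begin{bmatrix}\Sigma_{\mathbf{B}}\\0\end{bmatrix}V_{\mathbf{B}}^{\mathrm T}, \] where $V_{\mathbf{C},2}\in\mathbb{R}^{n\times(n-q_Cn_o)}$ and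 $U_{\mathbf{B},2}\in\mathbb{R}^{n\times(n-q_Bn_f)}$. Let $V_1=V_{\mathbf{C},1}\Sigma_{\mathbf{C}}^{-1}U_{\mathbf{C}}^{\mathrm T}\hat{\mathbf{C}}$ and $W_1=U_{\mathbf{B},1}\Sigma_{\mathbf{B}}^{-1}V_{\mathbf{B}}^{\mathrm T}\hat{\mathbf{B}}^{\mathrm T}$. If there exists $Y\in\mathbb{R}^{(n-q_Bn_f)\times r}$ such that the matrix \[ \begin{bmatrix}(W_1+U_{\mathbf{B},2}Y)^{\mathrm T}A_1V_{\mathbf{C},2}\\ \vdots\\ (W_1+U_{\mathbf{B},2}Y)^{\mathrm T}A_{q_A}V_{\mathbf{C},2}\end{bmatrix}\in\mathbb{R}^{q_Ar\times(n-q_Cn_o)} \] has full row rank, then there exist $V,W\in\mathbb{R}^{n\times r}$ such that $\hat A_i=W^{\mathrm T}A_iV$ for $i=1,\dots,q_A$, $\hat B_j=W^{\mathrm T}B_j$ for $j=1,\dots,q_B$, and $\hat C_k=C_kV$ for $k=1,\dots,q_C$.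
   Context: In the singular value decompositions, $U_{\mathbf{C}}$, $[V_{\mathbf{C},1}\ V_{\mathbf{C},2}]$, $[U_{\mathbf{B},1}\ U_{\mathbf{B},2}]$, $V_{\mathbf{B}}$ are orthogonal matrices and $\Sigma_{\mathbf{C}}\in\mathbb{R}^{q_Cn_o\times q_Cn_o}$, $\Sigma_{\mathbf{B}}\in\mathbb{R}^{q_Bn_f\times q_Bn_f}$ are diagonal with positive diagonal entries. *)

theory Defs
  imports "Jordan_Normal_Form.DL_Rank"
begin

text \<open>Block column [F 0; F 1; ...; F (q-1)] of q blocks, each with m rows and c columns
  (blocks indexed from 0).\<close>
definition vstack :: "nat \<Rightarrow> nat \<Rightarrow> nat \<Rightarrow> (nat \<Rightarrow> real mat) \<Rightarrow> real mat" where
  "vstack q m c F = mat (q * m) c (\<lambda>(i, j). F (i div m) $$ (i mod m, j))"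

definition hstack :: "nat \<Rightarrow> nat \<Rightarrow> nat \<Rightarrow> (nat \<Rightarrow> real mat) \<Rightarrow> real mat" where
  "hstack q rr m F = mat rr (q * m) (\<lambda>(i, j). F (j div m) $$ (i, j mod m))"

definition hcat :: "real mat \<Rightarrow> real mat \<Rightarrow> real mat" where
  "hcat X Y = mat (dim_row X) (dim_col X + dim_col Y)
     (\<lambda>(i, j). if j < dim_col X then X $$ (i, j) else Y $$ (i, j - dim_col X))"

definition vcat :: "real mat \<Rightarrow> real mat \<Rightarrow> real mat" where
  "vcat X Y = mat (dim_row X + dim_row Y) (dim_col X)
     (\<lambda>(i, j). if i < dim_row X then X $$ (i, j) else Y $$ (i - dim_row X, j))"

definition orth :: "nat \<Rightarrow> real mat \<Rightarrow> bool" where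
  "orth k Q \<longleftrightarrow> Q \<in> carrier_mat k k \<and> transpose_mat Q * Q = 1\<^sub>m k \<and> Q * transpose_mat Q = 1\<^sub>m k"

definition pos_diag :: "nat \<Rightarrow> real mat \<Rightarrow> bool" where
  "pos_diag k S \<longleftrightarrow> S \<in> carrier_mat k k \<and> diagonal_mat S \<and> (\<forall>i<k. S $$ (i, i) > 0)"

definition diag_inv :: "real mat \<Rightarrow> real mat" where
  "diag_inv S = mat (dim_row S) (dim_col S) (\<lambda>(i, j). if i = j then 1 / S $$ (i, i) else 0)"

definition mrank :: "real mat \<Rightarrow> nat" where
  "mrank M = vec_space.rank (dim_row M) M"

end

theory Submission
  imports Defs
begin

text \<open>
  The SVDs give explicit right inverses: with P_C = V_C1 Sigma_C^-1 U_C^T we have C P_C = I and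
  C V_C2 = 0, and dually B^T P_B = I and B^T U_B2 = 0 for P_B = U_B1 Sigma_B^-1 V_B^T. Hence every
  V = P_C hat C + V_C2 Z satisfies C V = hat C, and every W = P_B hat B^T + U_B2 Y satisfies
  W^T B = hat B. Fixing W by the given Y, the conditions hat A_i = W^T A_i V become the linear system
  [W^T A_i V_C2]_i Z = [hat A_i - W^T A_i P_C hat C]_i, which is solvable since its coefficient matrix
  has full row rank.
\<close>

lemma hcat_carrier [simp]:
  "X \<in> carrier_mat a b \<Longrightarrow> Y \<in> carrier_mat a c \<Longrightarrow> hcat X Y \<in> carrier_mat a (b + c)"
  unfolding hcat_def by auto

lemma vcat_carrier [simp]:
  "X \<in> carrier_mat a c \<Longrightarrow> Y \<in> carrier_mat b c \<Longrightarrow> vcat X Y \<in> carrier_mat (a + b) c"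
  unfolding vcat_def by auto

lemma dim_hcat [simp]:
  "dim_row (hcat X Y) = dim_row X" "dim_col (hcat X Y) = dim_col X + dim_col Y"
  unfolding hcat_def by auto

lemma index_hcat [simp]:
  "i < dim_row X \<Longrightarrow> j < dim_col X + dim_col Y \<Longrightarrow>
    hcat X Y $$ (i, j) = (if j < dim_col X then X $$ (i, j) else Y $$ (i, j - dim_col X))"
  unfolding hcat_def by auto

lemma col_hcat:
  assumes "X \<in> carrier_mat a b" "Y \<in> carrier_mat a c" "j < b + c"
  shows "col (hcat X Y) j = (if j < b then col X j else col Y (j - b))"
  by (rule eq_vecI) (use assms in \<open>auto simp: hcat_def\<close>)

lemma mult_hcat:
  assumes "M \<in> carrier_mat p a" "X \<in> carrier_mat a b" "Y \<in> carrier_mat a c"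
  shows "M * hcat X Y = hcat (M * X) (M * Y)"
  by (rule eq_matI) (use assms in \<open>auto simp: col_hcat\<close>)

lemma hcat_eq_iff:
  assumes "X \<in> carrier_mat a b" "X' \<in> carrier_mat a b" "Y \<in> carrier_mat a c" "Y' \<in> carrier_mat a c"
  shows "hcat X Y = hcat X' Y' \<longleftrightarrow> X = X' \<and> Y = Y'"
proof
  assume eq: "hcat X Y = hcat X' Y'"
  have "X $$ (i, j) = X' $$ (i, j)" if "i < a" "j < b" for i j
    using arg_cong[OF eq, of "\<lambda>H. H $$ (i, j)"] that assms by (simp add: hcat_def)
  moreover have "Y $$ (i, j) = Y' $$ (i, j)" if "i < a" "j < c" for i j
    using arg_cong[OF eq, of "\<lambda>H. H $$ (i, b + j)"] that assms by (simp add: hcat_def)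
  ultimately show "X = X' \<and> Y = Y'"
    using assms by (auto intro!: eq_matI)
qed simp

lemma transpose_vcat:
  assumes "X \<in> carrier_mat a c" "Y \<in> carrier_mat b c"
  shows "transpose_mat (vcat X Y) = hcat (transpose_mat X) (transpose_mat Y)"
  by (rule eq_matI) (use assms in \<open>auto simp: hcat_def vcat_def\<close>)

lemma dim_vstack [simp]: "dim_row (vstack q m c F) = q * m" "dim_col (vstack q m c F) = c"
  by (simp_all add: vstack_def)

lemma dim_hstack [simp]: "dim_row (hstack q rr m F) = rr" "dim_col (hstack q rr m F) = q * m"
  by (simp_all add: hstack_def)

lemma vstack_carrier [simp]: "vstack q m c F \<in> carrier_mat (q * m) c"
  by (rule carrier_matI) simp_all

lemma div_mod_less_mult: "i < q * (m :: nat) \<Longrightarrow> i div m < q \<and> i mod m < m"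
  by (metis less_mult_imp_div_less mod_less_divisor mult_0_right mult.commute neq0_conv not_less_zero)

lemma transpose_hstack:
  assumes "\<forall>k<q. F k \<in> carrier_mat rr m"
  shows "transpose_mat (hstack q rr m F) = vstack q m rr (\<lambda>k. transpose_mat (F k))"
proof (rule eq_matI)
  fix i j assume "i < dim_row (vstack q m rr (\<lambda>k. transpose_mat (F k)))"
    "j < dim_col (vstack q m rr (\<lambda>k. transpose_mat (F k)))"
  then have ij: "i < q * m" "j < rr" by auto
  then have blk: "i div m < q" "i mod m < m" using div_mod_less_mult by auto
  then have "F (i div m) \<in> carrier_mat rr m" using assms by blast
  then show "transpose_mat (hstack q rr m F) $$ (i, j) = vstack q m rr (\<lambda>k. transpose_mat (F k)) $$ (i, j)"
    using ij blk by (simp add: hstack_def vstack_def)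
qed simp_all

lemma vstack_mult:
  assumes F: "\<forall>k<q. F k \<in> carrier_mat m c" and Z: "Z \<in> carrier_mat c d"
  shows "vstack q m c F * Z = vstack q m d (\<lambda>k. F k * Z)"
proof (rule eq_matI)
  fix i j assume "i < dim_row (vstack q m d (\<lambda>k. F k * Z))" "j < dim_col (vstack q m d (\<lambda>k. F k * Z))"
  then have ij: "i < q * m" "j < d" by auto
  then have blk: "i div m < q" "i mod m < m" using div_mod_less_mult by auto
  have "row (vstack q m c F) i = row (F (i div m)) (i mod m)"
    by (rule eq_vecI) (use ij blk F in \<open>auto simp: vstack_def\<close>)
  then show "(vstack q m c F * Z) $$ (i, j) = vstack q m d (\<lambda>k. F k * Z) $$ (i, j)"
    using ij blk F Z by (auto simp: vstack_def)
qed (use Z in \<open>auto simp: vstack_def\<close>)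

lemma vstack_eqD:
  assumes eq: "vstack q m c F = vstack q m c G" and k: "k < q"
    and F: "F k \<in> carrier_mat m c" and G: "G k \<in> carrier_mat m c"
  shows "F k = G k"
proof (rule eq_matI)
  fix i j assume "i < dim_row (G k)" "j < dim_col (G k)"
  then have ij: "i < m" "j < c" using G by auto
  have "k * m + i < Suc k * m" using ij by simp
  also have "\<dots> \<le> q * m" using k by (intro mult_le_mono1) simp
  finally show "F k $$ (i, j) = G k $$ (i, j)"
    using ij arg_cong[OF eq, of "\<lambda>M. M $$ (k * m + i, j)"] by (simp add: vstack_def)
qed (use F G in auto)

lemma vstack_mult_eqD:
  assumes eq: "vstack q m c F * Z = vstack q m d G" and k: "k < q"
    and F: "\<forall>k<q. F k \<in> carrier_mat m c" and G: "G k \<in> carrier_mat m d" and Z: "Z \<in> carrier_mat c d"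
  shows "F k * Z = G k"
  using vstack_eqD[OF eq[unfolded vstack_mult[OF F Z]] k] mult_carrier_mat[OF F[rule_format, OF k] Z] G
  by simp

lemma transpose_hstack_mult_eqD:
  assumes eq: "transpose_mat (hstack q n c F) * W = transpose_mat (hstack q r c G)" and k: "k < q"
    and F: "\<forall>k<q. F k \<in> carrier_mat n c" and G: "\<forall>k<q. G k \<in> carrier_mat r c"
    and W: "W \<in> carrier_mat n r"
  shows "G k = transpose_mat W * F k"
proof -
  have "vstack q c n (\<lambda>k. transpose_mat (F k)) * W = vstack q c r (\<lambda>k. transpose_mat (G k))"
    using eq transpose_hstack[OF F] transpose_hstack[OF G] by simp
  then have "transpose_mat (F k) * W = transpose_mat (G k)"
    by (rule vstack_mult_eqD[OF _ k]) (use F G W k in auto)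
  then show ?thesis
    using arg_cong[of _ _ transpose_mat] transpose_mult[of "transpose_mat (F k)" c n W r] F W k by auto
qed

lemma pos_diag_transpose: "pos_diag k S \<Longrightarrow> transpose_mat S = S"
  unfolding pos_diag_def diagonal_mat_def by (intro eq_matI) (auto, metis)

lemma diag_inv_carrier [simp]: "pos_diag k S \<Longrightarrow> diag_inv S \<in> carrier_mat k k"
  unfolding pos_diag_def diag_inv_def by auto

lemma pos_diag_mult_diag_inv:
  assumes S: "pos_diag k S"
  shows "S * diag_inv S = 1\<^sub>m k"
proof (rule eq_matI)
  fix i j assume "i < dim_row (1\<^sub>m k)" "j < dim_col (1\<^sub>m k)"
  then have ij: "i < k" "j < k" by auto
  have Sc: "S \<in> carrier_mat k k" and dg: "diagonal_mat S" and pos: "S $$ (i, i) > 0"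
    using S ij unfolding pos_diag_def by auto
  have "(S * diag_inv S) $$ (i, j) = (\<Sum>l\<in>{0..<k}. S $$ (i, l) * diag_inv S $$ (l, j))"
    using Sc ij by (auto simp: scalar_prod_def diag_inv_def)
  also have "\<dots> = (\<Sum>l\<in>{0..<k}. if l = i then S $$ (i, i) * diag_inv S $$ (i, j) else 0)"
    by (rule sum.cong) (use dg Sc ij in \<open>auto simp: diagonal_mat_def\<close>)
  also have "\<dots> = 1\<^sub>m k $$ (i, j)" using ij pos Sc by (auto simp: diag_inv_def)
  finally show "(S * diag_inv S) $$ (i, j) = 1\<^sub>m k $$ (i, j)" .
qed (use S in \<open>auto simp: pos_diag_def diag_inv_def\<close>)

lemma svd_right_blocks:
  assumes X: "X \<in> carrier_mat n k" and Y: "Y \<in> carrier_mat n m"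
    and orth: "transpose_mat (hcat X Y) * hcat X Y = 1\<^sub>m n"
    and U: "U \<in> carrier_mat p k" and S: "S \<in> carrier_mat k k"
    and M: "M = U * hcat S (0\<^sub>m k m) * transpose_mat (hcat X Y)"
  shows "M * X = U * S" and "M * Y = 0\<^sub>m p m"
proof -
  let ?H = "hcat X Y"
  have H: "?H \<in> carrier_mat n (k + m)" using X Y by simp
  then have n: "k + m = n" using arg_cong[OF orth, of dim_col] X Y by simp
  have S0: "hcat S (0\<^sub>m k m) \<in> carrier_mat k n" using hcat_carrier[OF S zero_carrier_mat[of k m]] n by simp
  have Mc: "M \<in> carrier_mat p n" using M U S0 H n by simp
  have "hcat (M * X) (M * Y) = M * ?H"
    using mult_hcat[OF Mc X Y] by simp
  also have "\<dots> = U * hcat S (0\<^sub>m k m) * (transpose_mat ?H * ?H)"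
    using M U S0 H n by (simp add: assoc_mult_mat[of _ p k _ n _ n] assoc_mult_mat[of _ k n _ n _ n])
  also have "\<dots> = hcat (U * S) (0\<^sub>m p m)"
    using orth U S n mult_hcat[OF U S, of "0\<^sub>m k m" m] by simp
  finally show "M * X = U * S" and "M * Y = 0\<^sub>m p m"
    using hcat_eq_iff[of "M * X" p k "U * S" "M * Y" m "0\<^sub>m p m"] Mc U S X Y by auto
qed

lemma transpose_svd:
  assumes X: "X \<in> carrier_mat n k" and Y: "Y \<in> carrier_mat n m"
    and S: "S \<in> carrier_mat k k" and V: "V \<in> carrier_mat q k"
  shows "transpose_mat (hcat X Y * vcat S (0\<^sub>m m k) * transpose_mat V)
       = V * hcat (transpose_mat S) (0\<^sub>m k m) * transpose_mat (hcat X Y)"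
proof -
  have H: "hcat X Y \<in> carrier_mat n (k + m)" and S0: "vcat S (0\<^sub>m m k) \<in> carrier_mat (k + m) k"
    using X Y S by simp_all
  have "transpose_mat (hcat X Y * vcat S (0\<^sub>m m k) * transpose_mat V)
      = V * (transpose_mat (vcat S (0\<^sub>m m k)) * transpose_mat (hcat X Y))"
    using transpose_mult[OF mult_carrier_mat[OF H S0], of "transpose_mat V" q]
      transpose_mult[OF H S0] V by simp
  also have "\<dots> = V * hcat (transpose_mat S) (0\<^sub>m k m) * transpose_mat (hcat X Y)"
    using transpose_vcat[OF S, of "0\<^sub>m m k" m] V H S
    by (simp add: assoc_mult_mat[of V q k _ "k + m" _ n])
  finally show ?thesis .
qed

lemma mult_right_inverse_from_factor:
  fixes M :: "'a :: semiring_1 mat"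
  assumes M: "M \<in> carrier_mat k n" and X: "X \<in> carrier_mat n k"
    and U: "U \<in> carrier_mat k k" and S: "S \<in> carrier_mat k k" and S': "S' \<in> carrier_mat k k"
    and MX: "M * X = U * S" and UU: "U * transpose_mat U = 1\<^sub>m k" and SS: "S * S' = 1\<^sub>m k"
  shows "M * (X * S' * transpose_mat U) = 1\<^sub>m k"
proof -
  have "M * (X * S' * transpose_mat U) = M * X * S' * transpose_mat U"
    using M X U S' by (simp add: assoc_mult_mat[of _ k n _ k] assoc_mult_mat[of _ k k _ k])
  also have "\<dots> = U * (S * S') * transpose_mat U"
    using U S S' by (simp add: MX assoc_mult_mat[of _ k k _ k])
  also have "\<dots> = 1\<^sub>m k" using UU SS right_mult_one_mat[OF U] by simp
  finally show ?thesis .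
qed

lemma svd_pseudo_inverse:
  assumes X: "X \<in> carrier_mat n k" and Y: "Y \<in> carrier_mat n m" and H: "orth n (hcat X Y)"
    and U: "orth k U" and S: "pos_diag k S"
    and M: "M = U * hcat S (0\<^sub>m k m) * transpose_mat (hcat X Y)"
  shows "M * (X * diag_inv S * transpose_mat U) = 1\<^sub>m k" and "M * Y = 0\<^sub>m k m"
proof -
  have Uc: "U \<in> carrier_mat k k" and Sc: "S \<in> carrier_mat k k"
    using U S unfolding orth_def pos_diag_def by auto
  have HH: "transpose_mat (hcat X Y) * hcat X Y = 1\<^sub>m n" using H unfolding orth_def by auto
  have "n = k + m" using H X Y unfolding orth_def by auto
  then have "transpose_mat (hcat X Y) \<in> carrier_mat (k + m) n" using X Y by simp
  then have Mc: "M \<in> carrier_mat k n"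
    unfolding M by (rule mult_carrier_mat[OF mult_carrier_mat[OF Uc hcat_carrier[OF Sc zero_carrier_mat]]])
  show "M * Y = 0\<^sub>m k m" using svd_right_blocks(2)[OF X Y HH Uc Sc M] .
  show "M * (X * diag_inv S * transpose_mat U) = 1\<^sub>m k"
    using mult_right_inverse_from_factor[OF Mc X Uc Sc diag_inv_carrier[OF S] svd_right_blocks(1)[OF X Y HH Uc Sc M]]
      U pos_diag_mult_diag_inv[OF S] unfolding orth_def by auto
qed

lemma svd_transpose_pseudo_inverse:
  assumes X: "X \<in> carrier_mat n k" and Y: "Y \<in> carrier_mat n m" and H: "orth n (hcat X Y)"
    and V: "orth k V" and S: "pos_diag k S"
    and M: "M = hcat X Y * vcat S (0\<^sub>m m k) * transpose_mat V"
  shows "transpose_mat M * (X * diag_inv S * transpose_mat V) = 1\<^sub>m k"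
    and "transpose_mat M * Y = 0\<^sub>m k m"
proof -
  have "transpose_mat M = V * hcat S (0\<^sub>m k m) * transpose_mat (hcat X Y)"
    using transpose_svd[OF X Y, of S V k] pos_diag_transpose[OF S] M S V
    unfolding orth_def pos_diag_def by auto
  from svd_pseudo_inverse[OF X Y H V S this]
  show "transpose_mat M * (X * diag_inv S * transpose_mat V) = 1\<^sub>m k"
    and "transpose_mat M * Y = 0\<^sub>m k m" .
qed

lemma right_inverse_affine_solution:
  fixes M :: "'a :: semiring_1 mat"
  assumes M: "M \<in> carrier_mat p n" and P: "P \<in> carrier_mat n p" and N: "N \<in> carrier_mat n m"
    and R: "R \<in> carrier_mat p r" and Z: "Z \<in> carrier_mat m r"
    and MP: "M * P = 1\<^sub>m p" and MN: "M * N = 0\<^sub>m p m"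
  shows "M * (P * R + N * Z) = R"
proof -
  have "M * (P * R + N * Z) = M * (P * R) + M * (N * Z)"
    by (rule mult_add_distrib_mat) (use M P N R Z in auto)
  also have "\<dots> = (M * P) * R + (M * N) * Z"
    using assoc_mult_mat[OF M P R] assoc_mult_mat[OF M N Z] by simp
  also have "\<dots> = R" using MP MN R Z by simp
  finally show ?thesis .
qed

lemma (in vec_space) full_row_rank_mult_vec_surj:
  assumes A: "A \<in> carrier_mat n nc" and rk: "rank A = n" and b: "b \<in> carrier_vec n"
  shows "\<exists>z \<in> carrier_vec nc. A *\<^sub>v z = b"
proof -
  obtain S where max: "maximal S (\<lambda>T. T \<subseteq> set (cols A) \<and> lin_indpt T)" and fin: "finite S"
    using maximal_exists_superset[of "set (cols A)" "\<lambda>T. T \<subseteq> set (cols A) \<and> lin_indpt T" "{}"]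
    by (auto simp: lin_dep_def)
  have S: "S \<subseteq> set (cols A)" "lin_indpt S" using max unfolding maximal_def by auto
  have "card S = n" using rank_card_indpt[OF A max] rk by simp
  moreover have "S \<subseteq> carrier_vec n" using S(1) cols_dim[of A] A by auto
  ultimately have "basis S" using fin S(2) dim_is_n fin_dim by (intro dim_li_is_basis) auto
  then have "b \<in> span S" using b unfolding basis_def by simp
  then have "b \<in> col_space A" using span_is_monotone[OF S(1)] unfolding col_space_def by auto
  then show ?thesis using col_space_eq[OF A] A by auto
qed

lemma full_row_rank_right_solvable:
  assumes M: "M \<in> carrier_mat p m" and rk: "mrank M = p" and R: "R \<in> carrier_mat p r"
  shows "\<exists>Z \<in> carrier_mat m r. M * Z = R"
proof -
  have "\<forall>j \<in> {..<r}. \<exists>z \<in> carrier_vec m. M *\<^sub>v z = col R j"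
    using vec_space.full_row_rank_mult_vec_surj[OF M] rk M R unfolding mrank_def by auto
  then obtain f where f: "\<And>j. j < r \<Longrightarrow> f j \<in> carrier_vec m \<and> M *\<^sub>v f j = col R j"
    by (metis lessThan_iff)
  define Z where "Z = mat m r (\<lambda>(i, j). f j $ i)"
  have Z: "Z \<in> carrier_mat m r" unfolding Z_def by simp
  have colZ: "col Z j = f j" if "j < r" for j
    using f[OF that] that unfolding Z_def by (intro eq_vecI) auto
  have "M * Z = R"
  proof (rule eq_matI)
    fix i j assume "i < dim_row R" "j < dim_col R"
    then have ij: "i < p" "j < r" using R by auto
    then have "(M * Z) $$ (i, j) = (M *\<^sub>v f j) $ i" using M Z colZ by simp
    also have "\<dots> = R $$ (i, j)" using f ij R by simp
    finally show "(M * Z) $$ (i, j) = R $$ (i, j)" .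
  qed (use M R Z in auto)
  with Z show ?thesis by blast
qed

lemma full_row_rank_stack_correction:
  fixes G Ah :: "nat \<Rightarrow> real mat"
  assumes G: "\<forall>i<q. G i \<in> carrier_mat r n \<and> Ah i \<in> carrier_mat r r"
    and V1: "V1 \<in> carrier_mat n r" and N: "N \<in> carrier_mat n m"
    and rk: "mrank (vstack q r m (\<lambda>i. G i * N)) = q * r"
  shows "\<exists>Z \<in> carrier_mat m r. \<forall>i<q. Ah i = G i * (V1 + N * Z)"
proof -
  obtain Z where Z: "Z \<in> carrier_mat m r"
    and MZ: "vstack q r m (\<lambda>i. G i * N) * Z = vstack q r r (\<lambda>i. Ah i - G i * V1)"
    using full_row_rank_right_solvable[OF vstack_carrier rk vstack_carrier] by blast
  have "Ah i = G i * (V1 + N * Z)" if i: "i < q" for i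
  proof -
    have Gi: "G i \<in> carrier_mat r n" and Ahi: "Ah i \<in> carrier_mat r r" using G i by auto
    have "G i * (V1 + N * Z) = G i * V1 + G i * N * Z"
      using Gi V1 N Z by (simp add: mult_add_distrib_mat[OF Gi V1] assoc_mult_mat[OF Gi N Z])
    also have "G i * N * Z = Ah i - G i * V1"
      by (rule vstack_mult_eqD[OF MZ i]) (use G N Z Gi Ahi V1 in \<open>auto intro: minus_carrier_mat\<close>)
    also have "G i * V1 + (Ah i - G i * V1) = Ah i"
      using Gi V1 Ahi by (intro eq_matI) auto
    finally show ?thesis by simp
  qed
  with Z show ?thesis by blast
qed

theorem theorem2:
  fixes n nf no r qA qB qC :: nat
    and A Ah B Bh C Ch :: "nat \<Rightarrow> real mat"
    and UC SC VC1 VC2 UB1 UB2 SB VB :: "real mat"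
  assumes A: "\<forall>i<qA. A i \<in> carrier_mat n n \<and> Ah i \<in> carrier_mat r r"
    and B: "\<forall>j<qB. B j \<in> carrier_mat n nf \<and> Bh j \<in> carrier_mat r nf"
    and C: "\<forall>k<qC. C k \<in> carrier_mat no n \<and> Ch k \<in> carrier_mat no r"
    and Bfull: "mrank (hstack qB n nf B) = qB * nf"
    and Cfull: "mrank (vstack qC no n C) = qC * no"
    and UC: "orth (qC * no) UC"
    and SC: "pos_diag (qC * no) SC"
    and VC1: "VC1 \<in> carrier_mat n (qC * no)"
    and VC2: "VC2 \<in> carrier_mat n (n - qC * no)"
    and VC: "orth n (hcat VC1 VC2)"
    and Csvd: "vstack qC no n C
       = UC * hcat SC (0\<^sub>m (qC * no) (n - qC * no)) * transpose_mat (hcat VC1 VC2)"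
    and UB1: "UB1 \<in> carrier_mat n (qB * nf)"
    and UB2: "UB2 \<in> carrier_mat n (n - qB * nf)"
    and UB: "orth n (hcat UB1 UB2)"
    and SB: "pos_diag (qB * nf) SB"
    and VB: "orth (qB * nf) VB"
    and Bsvd: "hstack qB n nf B
       = hcat UB1 UB2 * vcat SB (0\<^sub>m (n - qB * nf) (qB * nf)) * transpose_mat VB"
    and Y: "\<exists>Y \<in> carrier_mat (n - qB * nf) r.
       (let V1 = VC1 * diag_inv SC * transpose_mat UC * vstack qC no r Ch;
            W1 = UB1 * diag_inv SB * transpose_mat VB * transpose_mat (hstack qB r nf Bh)
        in mrank (vstack qA r (n - qC * no)
                   (\<lambda>i. transpose_mat (W1 + UB2 * Y) * A i * VC2)) = qA * r)"
  shows "\<exists>V \<in> carrier_mat n r. \<exists>W \<in> carrier_mat n r.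
           (\<forall>i<qA. Ah i = transpose_mat W * A i * V)
         \<and> (\<forall>j<qB. Bh j = transpose_mat W * B j)
         \<and> (\<forall>k<qC. Ch k = C k * V)"
proof -
  define PC where "PC = VC1 * diag_inv SC * transpose_mat UC"
  define PB where "PB = UB1 * diag_inv SB * transpose_mat VB"
  define Bhs where "Bhs = transpose_mat (hstack qB r nf Bh)"
  obtain Y where Y: "Y \<in> carrier_mat (n - qB * nf) r"
    and rk: "mrank (vstack qA r (n - qC * no)
               (\<lambda>i. transpose_mat (PB * Bhs + UB2 * Y) * A i * VC2)) = qA * r"
    using Y unfolding PB_def Bhs_def Let_def by blast
  define W where "W = PB * Bhs + UB2 * Y"
  have PC: "PC \<in> carrier_mat n (qC * no)" and PB: "PB \<in> carrier_mat n (qB * nf)"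
    using UC VB SB SC VC1 UB1 unfolding PC_def PB_def orth_def by auto
  have W: "W \<in> carrier_mat n r" using PB UB2 Y unfolding W_def Bhs_def by auto
  note C_inv = svd_pseudo_inverse[OF VC1 VC2 VC UC SC Csvd, folded PC_def]
  note B_inv = svd_transpose_pseudo_inverse[OF UB1 UB2 UB VB SB Bsvd, folded PB_def]
  have "transpose_mat (hstack qB n nf B) * W = Bhs"
    unfolding W_def by (rule right_inverse_affine_solution[OF _ PB UB2 _ Y B_inv]) (auto simp: Bhs_def)
  then have Bpart: "\<forall>j<qB. Bh j = transpose_mat W * B j"
    using transpose_hstack_mult_eqD[of qB n nf B W r Bh] B W unfolding Bhs_def by auto
  have "\<forall>i<qA. transpose_mat W * A i \<in> carrier_mat r n \<and> Ah i \<in> carrier_mat r r"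
    using A W by auto
  then obtain Z where Z: "Z \<in> carrier_mat (n - qC * no) r"
    and Apart: "\<forall>i<qA. Ah i = transpose_mat W * A i * (PC * vstack qC no r Ch + VC2 * Z)"
    using full_row_rank_stack_correction[OF _ mult_carrier_mat[OF PC vstack_carrier] VC2 rk[folded W_def]]
    by blast
  define V where "V = PC * vstack qC no r Ch + VC2 * Z"
  have V: "V \<in> carrier_mat n r" using PC VC2 Z unfolding V_def by auto
  have "vstack qC no n C * V = vstack qC no r Ch"
    unfolding V_def by (rule right_inverse_affine_solution[OF _ PC VC2 _ Z C_inv]) auto
  then have Cpart: "\<forall>k<qC. Ch k = C k * V"
    using vstack_mult_eqD[of qC no n C V] C V by auto
  show ?thesis using V W Apart Bpart Cpart unfolding V_def by blast
qed

end
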